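(* Let $M\subseteq\mathbb{R}^n$ be a lattice-free polyhedron given by $M=\{x\in\mathbb{R}^n:a_i\cdot x\le b_i\ \forall i\in[m]\}$ with $m\in\mathbb{N}$, $a_1,\dots,a_m\in\mathbb{R}^n\setminus\{0\}$, $b_1,\dots,b_m\in\mathbb{R}$. Then there is a nonempty subset $I\subseteq[m]$ such that $P=\{x\in\mathbb{R}^n:a_i\cdot x\le b_i\ \forall i\in I\}$ can be represented as a direct Minkowski sum $P=\Delta\oplus U$, where $U$ is a $k$-dimensional linear subspace of $\mathbb{R}^n$ with $k\in\{0,\dots,n-1\}$ and $\Delta$ is an $(n-k)$-dimensional simplex.
   Context: A set $B\subseteq\mathbb{R}^n$ is lattice-free if it is an $n$-dimensional closed convex set with $\operatorname{int}(B)\cap\mathbb{Z}^n=\emptyset$. $[m]=\{1,\dots,m\}$. A Minkowski sum $A+B$ is direct, written $A\oplus B$, if every point of $A+B$ has a unique representation $a+b$ with $a\in A$, $b\in B$. *)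

theory Defs
  imports "HOL-Analysis.Analysis"
begin

definition int_lattice :: "(real ^ 'n) set" where
  "int_lattice = {x. \<forall>i. x $ i \<in> \<int>}"

definition lattice_free :: "(real ^ 'n) set \<Rightarrow> bool" where
  "lattice_free B \<longleftrightarrow> closed B \<and> convex B \<and> aff_dim B = int CARD('n)
      \<and> interior B \<inter> int_lattice = {}"

definition direct_sum_eq :: "'a::ab_group_add set \<Rightarrow> 'a set \<Rightarrow> 'a set \<Rightarrow> bool" where
  "direct_sum_eq P A B \<longleftrightarrow> P = {a + b | a b. a \<in> A \<and> b \<in> B}
      \<and> (\<forall>a1\<in>A. \<forall>a2\<in>A. \<forall>b1\<in>B. \<forall>b2\<in>B. a1 + b1 = a2 + b2 \<longrightarrow> a1 = a2 \<and> b1 = b2)"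

end

theory Submission
  imports Defs
begin

text \<open>An interior point x of M satisfies every inequality strictly, while no lattice point
  does. Hence 0 lies in the convex hull of the normals a i: otherwise some w makes an acute
  angle with all of them, and rounding x - t w for large t gives a lattice point satisfying
  every inequality strictly. Take a smallest index set J carrying a positive dependency
  \<Sum> lam i a i = 0; by minimality any |J| - 1 of these normals are linearly independent.
  Evaluating at x shows \<Sum> lam i b i > 0. The polyhedron of J is then the direct sum of
  the subspace {x. a i \<bullet> x = 0 for i \<in> J}, of dimension n - |J| + 1, and the simplex
  whose j-th vertex lies on every facet except the j-th.\<close>

lemma round_vector_in_int_lattice_dist_le:
  fixes z :: "real ^ 'n"
  defines "p \<equiv> (\<chi> k. real_of_int (round (z $ k)))"
  shows "p \<in> int_lattice" and "norm (p - z) \<le> real CARD('n)"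
proof -
  show "p \<in> int_lattice" by (simp add: p_def int_lattice_def)
  have "norm (p - z) \<le> (\<Sum>k\<in>UNIV. \<bar>(p - z) $ k\<bar>)" by (rule norm_le_l1_cart)
  also have "\<dots> \<le> (\<Sum>k\<in>(UNIV::'n set). 1)"
  proof (rule sum_mono)
    fix k
    have "\<bar>real_of_int (round (z $ k)) - z $ k\<bar> \<le> 1/2"
      using of_int_round_abs_le by blast
    then show "\<bar>(p - z) $ k\<bar> \<le> 1" by (simp add: p_def)
  qed
  finally show "norm (p - z) \<le> real CARD('n)" by simp
qed

lemma lattice_point_strictly_feasible:
  fixes a :: "'i \<Rightarrow> real ^ 'n" and b :: "'i \<Rightarrow> real"
  assumes "finite I" and feasible: "\<forall>i\<in>I. a i \<bullet> x \<le> b i"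
    and "0 \<notin> convex hull (a ` I)"
  obtains p where "p \<in> int_lattice" and "\<forall>i\<in>I. a i \<bullet> p < b i"
proof -
  obtain w \<beta> where "0 < \<beta>" and w_acute: "\<And>i. i \<in> I \<Longrightarrow> \<beta> < w \<bullet> a i"
    using separating_hyperplane_closed_0[of "convex hull (a ` I)"] assms(1,3)
      compact_imp_closed[OF finite_imp_compact_convex_hull[of "a ` I"]]
    by (metis convex_convex_hull finite_imageI hull_inc image_eqI)
  define R where "R = (\<Sum>i\<in>I. norm (a i))"
  have "0 \<le> R" by (simp add: R_def sum_nonneg)
  have norm_le_R: "norm (a i) \<le> R" if "i \<in> I" for i
    unfolding R_def using \<open>finite I\<close> that by (intro member_le_sum) auto
  define t where "t = R * real CARD('n) / \<beta> + 1"
  define z where "z = x - t *\<^sub>R w"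
  define p :: "real ^ 'n" where "p = (\<chi> k. real_of_int (round (z $ k)))"
  have p: "p \<in> int_lattice" "norm (p - z) \<le> real CARD('n)"
    unfolding p_def by (fact round_vector_in_int_lattice_dist_le)+
  have "a i \<bullet> p < b i" if i: "i \<in> I" for i
  proof -
    have "a i \<bullet> p = a i \<bullet> x - t * (w \<bullet> a i) + a i \<bullet> (p - z)"
      by (simp add: z_def inner_commute algebra_simps)
    also have "a i \<bullet> (p - z) \<le> norm (a i) * norm (p - z)"
      by (rule order_trans[OF _ norm_cauchy_schwarz]) simp
    also have "norm (a i) * norm (p - z) \<le> R * real CARD('n)"
      using p(2) norm_le_R[OF i] \<open>0 \<le> R\<close> by (intro mult_mono) auto
    also have "R * real CARD('n) < t * \<beta>"
      using \<open>0 < \<beta>\<close> by (simp add: t_def field_simps)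
    also have "t * \<beta> \<le> t * (w \<bullet> a i)"
      using w_acute[OF i] \<open>0 \<le> R\<close> \<open>0 < \<beta>\<close> by (intro mult_left_mono) (auto simp: t_def)
    finally have "a i \<bullet> p < a i \<bullet> x" by simp
    with feasible i show ?thesis by fastforce
  qed
  with p(1) show thesis by (intro that) auto
qed

lemma strictly_feasible_in_interior:
  assumes "finite I" and "\<forall>i\<in>I. a i \<bullet> p < b i"
  shows "p \<in> interior {x. \<forall>i\<in>I. a i \<bullet> x \<le> b i}"
proof (rule interiorI)
  show "open (\<Inter>i\<in>I. {x. a i \<bullet> x < b i})"
    using \<open>finite I\<close> by (intro open_INT) (auto intro: open_halfspace_lt)
qed (use assms in \<open>auto simp: less_imp_le\<close>)

lemma interior_polyhedron_strict:
  fixes a :: "'i \<Rightarrow> 'v::euclidean_space"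
  assumes "x \<in> interior {x. \<forall>i\<in>I. a i \<bullet> x \<le> b i}" and "i \<in> I" and "a i \<noteq> 0"
  shows "a i \<bullet> x < b i"
proof -
  have "interior {x. \<forall>i\<in>I. a i \<bullet> x \<le> b i} \<subseteq> interior {x. a i \<bullet> x \<le> b i}"
    using \<open>i \<in> I\<close> by (intro interior_mono) auto
  then show ?thesis using assms by auto
qed

lemma lattice_free_interior_nonempty:
  fixes B :: "(real ^ 'n) set"
  assumes "lattice_free B"
  shows "interior B \<noteq> {}"
proof -
  have "convex B" and full: "aff_dim B = int CARD('n)"
    using assms by (auto simp: lattice_free_def)
  then have "rel_interior B \<noteq> {}"
    by (auto simp: rel_interior_eq_empty)
  moreover have "affine hull B = UNIV"
    using full aff_dim_eq_full[of B] by simp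
  ultimately show ?thesis by (simp add: rel_interior_interior)
qed

lemma lattice_free_polyhedron_normals:
  fixes a :: "'i \<Rightarrow> real ^ 'n"
  assumes "finite I" and "\<forall>i\<in>I. a i \<noteq> 0" and lf: "lattice_free {x. \<forall>i\<in>I. a i \<bullet> x \<le> b i}"
  obtains x where "\<forall>i\<in>I. a i \<bullet> x < b i" and "0 \<in> convex hull (a ` I)"
proof -
  let ?M = "{x. \<forall>i\<in>I. a i \<bullet> x \<le> b i}"
  obtain x where x: "x \<in> interior ?M"
    using lattice_free_interior_nonempty[OF lf] by blast
  have strict: "\<forall>i\<in>I. a i \<bullet> x < b i"
    using interior_polyhedron_strict[OF x] assms(2) by blast
  have "0 \<in> convex hull (a ` I)"
  proof (rule ccontr)
    assume "0 \<notin> convex hull (a ` I)"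
    then obtain p where "p \<in> int_lattice" "\<forall>i\<in>I. a i \<bullet> p < b i"
      using lattice_point_strictly_feasible[of I a x b] \<open>finite I\<close> strict by (auto simp: less_imp_le)
    then have "p \<in> interior ?M \<inter> int_lattice"
      using strictly_feasible_in_interior \<open>finite I\<close> by blast
    with lf show False by (simp add: lattice_free_def)
  qed
  with strict show thesis by (rule that)
qed

lemma convex_hull_finite_image:
  assumes "finite I"
  shows "convex hull (a ` I) = {\<Sum>i\<in>I. c i *\<^sub>R a i | c. (\<forall>i\<in>I. 0 \<le> c i) \<and> sum c I = 1}"
proof -
  have "a ` I = (\<Union>i\<in>I. {a i})" by blast
  then have "convex hull (a ` I) = convex hull (\<Union>i\<in>I. {a i})" by simp
  also have "\<dots> = {\<Sum>i\<in>I. c i *\<^sub>R s i | c s. (\<forall>i\<in>I. 0 \<le> c i) \<and> sum c I = 1 \<and> (\<forall>i\<in>I. s i \<in> {a i})}"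
    using assms by (intro convex_hull_finite_union) auto
  also have "\<dots> = {\<Sum>i\<in>I. c i *\<^sub>R a i | c. (\<forall>i\<in>I. 0 \<le> c i) \<and> sum c I = 1}"
  proof -
    have "(\<Sum>i\<in>I. c i *\<^sub>R s i) = (\<Sum>i\<in>I. c i *\<^sub>R a i)" if "\<forall>i\<in>I. s i \<in> {a i}" for c s
      using that by (intro sum.cong) auto
    then show ?thesis by fastforce
  qed
  finally show ?thesis .
qed

lemma zero_in_convex_hull_positive_dependency:
  assumes "finite I" and "0 \<in> convex hull (a ` I)"
  obtains J lam where "J \<subseteq> I" "J \<noteq> {}" "\<forall>i\<in>J. 0 < lam i" "(\<Sum>i\<in>J. lam i *\<^sub>R a i) = 0"
proof -
  obtain c where c_nonneg: "\<forall>i\<in>I. 0 \<le> c i" and "sum c I = 1"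
    and c_sum: "(\<Sum>i\<in>I. c i *\<^sub>R a i) = 0"
    using assms by (auto simp: convex_hull_finite_image)
  define J where "J = {i\<in>I. 0 < c i}"
  have "J \<noteq> {}"
  proof
    assume "J = {}"
    then have "\<forall>i\<in>I. c i = 0" using c_nonneg by (force simp: J_def)
    with \<open>sum c I = 1\<close> show False by simp
  qed
  moreover have "(\<Sum>i\<in>J. c i *\<^sub>R a i) = 0"
    using c_sum c_nonneg \<open>finite I\<close>
    by (subst sum.mono_neutral_left[of I]) (auto simp: J_def less_le)
  ultimately show thesis by (intro that[of J c]) (auto simp: J_def)
qed

text \<open>The Carath\'eodory-type reduction: subtracting the largest admissible multiple of a
  second dependency from a positive one kills at least one coefficient.\<close>
lemma positive_dependency_shrink:
  fixes a :: "'i \<Rightarrow> 'v::real_vector"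
  assumes "finite J" and lam: "\<forall>i\<in>J. 0 < lam i" and dep: "(\<Sum>i\<in>J. lam i *\<^sub>R a i) = 0"
    and w_dep: "(\<Sum>i\<in>J. w i *\<^sub>R a i) = 0" and "k \<in> J" "0 < w k"
    and "j0 \<in> J" "w j0 = 0"
  obtains J' nu where "j0 \<in> J'" "J' \<subset> J" "\<forall>i\<in>J'. 0 < nu i" "(\<Sum>i\<in>J'. nu i *\<^sub>R a i) = 0"
proof -
  define K where "K = {i\<in>J. 0 < w i}"
  have "finite K" "K \<noteq> {}" using \<open>finite J\<close> \<open>k \<in> J\<close> \<open>0 < w k\<close> by (auto simp: K_def)
  define t where "t = Min ((\<lambda>i. lam i / w i) ` K)"
  have "t \<in> (\<lambda>i. lam i / w i) ` K"
    unfolding t_def using \<open>finite K\<close> \<open>K \<noteq> {}\<close> by (intro Min_in) auto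
  then obtain i0 where i0: "i0 \<in> K" "t = lam i0 / w i0" by blast
  have t_le: "t \<le> lam i / w i" if "i \<in> K" for i
    unfolding t_def using \<open>finite K\<close> that by (intro Min_le) auto
  have "0 < t" using i0 lam by (auto simp: K_def)
  define nu where "nu i = lam i - t * w i" for i
  have nu_nonneg: "0 \<le> nu i" if "i \<in> J" for i
  proof (cases "0 < w i")
    case True
    then show ?thesis using t_le[of i] that by (auto simp: K_def nu_def field_simps)
  next
    case False
    then have "t * w i \<le> 0" using \<open>0 < t\<close> by (simp add: mult_nonneg_nonpos)
    then show ?thesis using lam that by (fastforce simp: nu_def)
  qed
  define J' where "J' = {i\<in>J. 0 < nu i}"
  have "i0 \<in> J - J'" using i0 by (auto simp: J'_def K_def nu_def)
  then have "J' \<subset> J" by (auto simp: J'_def)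
  moreover have "j0 \<in> J'" using \<open>j0 \<in> J\<close> \<open>w j0 = 0\<close> lam by (simp add: J'_def nu_def)
  moreover have "(\<Sum>i\<in>J'. nu i *\<^sub>R a i) = 0"
  proof -
    have "(\<Sum>i\<in>J'. nu i *\<^sub>R a i) = (\<Sum>i\<in>J. nu i *\<^sub>R a i)"
      using \<open>finite J\<close> nu_nonneg by (intro sum.mono_neutral_left) (auto simp: J'_def less_le)
    also have "\<dots> = (\<Sum>i\<in>J. lam i *\<^sub>R a i) - t *\<^sub>R (\<Sum>i\<in>J. w i *\<^sub>R a i)"
      by (simp add: nu_def scaleR_diff_left sum_subtractf scaleR_sum_right)
    finally show ?thesis using dep w_dep by simp
  qed
  ultimately show thesis by (intro that[of J' nu]) (auto simp: J'_def)
qed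

text \<open>Minimality of the positive dependency is encoded by linear independence of the
  vectors other than an arbitrarily chosen j0.\<close>
locale positive_circuit =
  fixes a :: "'i \<Rightarrow> 'v::euclidean_space" and J :: "'i set" and j0 :: 'i and lam :: "'i \<Rightarrow> real"
  assumes finite_J: "finite J" and j0_in_J: "j0 \<in> J"
    and lam_pos: "\<And>i. i \<in> J \<Longrightarrow> 0 < lam i"
    and dependency: "(\<Sum>i\<in>J. lam i *\<^sub>R a i) = 0"
    and independent_rest: "\<And>w. (\<Sum>i\<in>J - {j0}. w i *\<^sub>R a i) = 0 \<Longrightarrow> \<forall>k\<in>J - {j0}. w k = 0"

lemma minimal_positive_dependency_circuit:
  fixes a :: "'i \<Rightarrow> 'v::euclidean_space"
  assumes "finite J" and "j0 \<in> J" and lam: "\<forall>i\<in>J. 0 < lam i"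
    and dep: "(\<Sum>i\<in>J. lam i *\<^sub>R a i) = 0"
    and minimal: "\<And>J' mu. J' \<subseteq> J \<Longrightarrow> J' \<noteq> {} \<Longrightarrow> \<forall>i\<in>J'. 0 < mu i \<Longrightarrow>
                   (\<Sum>i\<in>J'. mu i *\<^sub>R a i) = 0 \<Longrightarrow> card J \<le> card J'"
  shows "positive_circuit a J j0 lam"
proof
  fix w assume w_dep: "(\<Sum>i\<in>J - {j0}. w i *\<^sub>R a i) = 0"
  show "\<forall>k\<in>J - {j0}. w k = 0"
  proof (rule ballI, rule ccontr)
    fix k assume k: "k \<in> J - {j0}" and "w k \<noteq> 0"
    define s :: real where "s = sgn (w k)"
    define w' where "w' i = (if i = j0 then 0 else s * w i)" for i
    have "0 < w' k" using k \<open>w k \<noteq> 0\<close> by (auto simp: w'_def s_def sgn_real_def)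
    have "(\<Sum>i\<in>J. w' i *\<^sub>R a i) = (\<Sum>i\<in>J - {j0}. w' i *\<^sub>R a i)"
      using \<open>finite J\<close> \<open>j0 \<in> J\<close> by (simp add: sum.remove w'_def)
    also have "\<dots> = s *\<^sub>R (\<Sum>i\<in>J - {j0}. w i *\<^sub>R a i)"
      by (simp add: scaleR_sum_right w'_def)
    finally have w'_dep: "(\<Sum>i\<in>J. w' i *\<^sub>R a i) = 0" using w_dep by simp
    have "k \<in> J" "w' j0 = 0" using k by (auto simp: w'_def)
    then obtain J' nu where "j0 \<in> J'" "J' \<subset> J" "\<forall>i\<in>J'. 0 < nu i"
      "(\<Sum>i\<in>J'. nu i *\<^sub>R a i) = 0"
      by (rule positive_dependency_shrink[OF \<open>finite J\<close> lam dep w'_dep _ \<open>0 < w' k\<close> \<open>j0 \<in> J\<close>])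
    then have "card J \<le> card J'" by (intro minimal) blast+
    with psubset_card_mono[OF \<open>finite J\<close> \<open>J' \<subset> J\<close>] show False by simp
  qed
qed (use \<open>finite J\<close> \<open>j0 \<in> J\<close> lam dep in auto)

lemma exists_positive_circuit:
  fixes a :: "'i \<Rightarrow> 'v::euclidean_space"
  assumes "finite I" and "0 \<in> convex hull (a ` I)"
  obtains J j0 lam where "J \<subseteq> I" and "positive_circuit a J j0 lam"
proof -
  define dependent_on where "dependent_on J \<longleftrightarrow> J \<subseteq> I \<and> J \<noteq> {} \<and>
      (\<exists>mu. (\<forall>i\<in>J. 0 < mu i) \<and> (\<Sum>i\<in>J. mu i *\<^sub>R a i) = 0)" for J
  obtain J0 mu where "J0 \<subseteq> I" "J0 \<noteq> {}" "\<forall>i\<in>J0. 0 < mu i" "(\<Sum>i\<in>J0. mu i *\<^sub>R a i) = 0"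
    by (rule zero_in_convex_hull_positive_dependency[OF assms])
  then have "dependent_on J0" unfolding dependent_on_def by blast
  then obtain J where "dependent_on J" and least: "\<And>J'. dependent_on J' \<Longrightarrow> card J \<le> card J'"
    using ex_has_least_nat[of dependent_on J0 card] by auto
  then obtain lam where "J \<subseteq> I" "J \<noteq> {}" and lam: "\<forall>i\<in>J. 0 < lam i"
    and dep: "(\<Sum>i\<in>J. lam i *\<^sub>R a i) = 0"
    unfolding dependent_on_def by auto
  obtain j0 where "j0 \<in> J" using \<open>J \<noteq> {}\<close> by blast
  have "finite J" using \<open>J \<subseteq> I\<close> \<open>finite I\<close> by (rule finite_subset)
  have "positive_circuit a J j0 lam"
  proof (rule minimal_positive_dependency_circuit[OF \<open>finite J\<close> \<open>j0 \<in> J\<close> lam dep])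
    fix J' mu assume "J' \<subseteq> J" "J' \<noteq> {}" "\<forall>i\<in>J'. 0 < mu i" "(\<Sum>i\<in>J'. mu i *\<^sub>R a i) = 0"
    with \<open>J \<subseteq> I\<close> show "card J \<le> card J'"
      by (intro least) (auto simp: dependent_on_def)
  qed
  with \<open>J \<subseteq> I\<close> show thesis by (rule that)
qed

context positive_circuit
begin

lemma inj_on_rest: "inj_on a (J - {j0})"
proof (rule inj_onI, rule ccontr)
  fix i k assume ik: "i \<in> J - {j0}" "k \<in> J - {j0}" "a i = a k" "i \<noteq> k"
  define w :: "'i \<Rightarrow> real" where "w j = (if j = i then 1 else if j = k then -1 else 0)" for j
  have "(\<Sum>j\<in>J - {j0}. w j *\<^sub>R a j) = (\<Sum>j\<in>{i, k}. w j *\<^sub>R a j)"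
    using ik finite_J by (intro sum.mono_neutral_right) (auto simp: w_def)
  also have "\<dots> = 0" using ik by (simp add: w_def)
  finally have "w i = 0" using independent_rest[of w] ik by blast
  then show False by (simp add: w_def)
qed

lemma independent_image_rest: "independent (a ` (J - {j0}))"
  unfolding independent_explicit
proof (intro conjI allI impI ballI)
  show "finite (a ` (J - {j0}))" using finite_J by simp
  fix c v assume c: "(\<Sum>v\<in>a ` (J - {j0}). c v *\<^sub>R v) = 0" and v: "v \<in> a ` (J - {j0})"
  have "(\<Sum>i\<in>J - {j0}. (c \<circ> a) i *\<^sub>R a i) = 0"
    using c sum.reindex[OF inj_on_rest, of "\<lambda>v. c v *\<^sub>R v"] by (simp add: o_def)
  then show "c v = 0" using independent_rest[of "c \<circ> a"] v by auto
qed

lemma a_in_span_rest: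
  assumes "i \<in> J"
  shows "a i \<in> span (a ` (J - {j0}))"
proof (cases "i = j0")
  case True
  have "lam j0 *\<^sub>R a j0 + (\<Sum>i\<in>J - {j0}. lam i *\<^sub>R a i) = 0"
    using dependency sum.remove[OF finite_J j0_in_J, of "\<lambda>i. lam i *\<^sub>R a i"] by simp
  then have "lam j0 *\<^sub>R a j0 = - (\<Sum>i\<in>J - {j0}. lam i *\<^sub>R a i)"
    by (simp add: eq_neg_iff_add_eq_0)
  moreover have "a j0 = (1 / lam j0) *\<^sub>R (lam j0 *\<^sub>R a j0)"
    using lam_pos[OF j0_in_J] by simp
  moreover have "(1 / lam j0) *\<^sub>R - (\<Sum>i\<in>J - {j0}. lam i *\<^sub>R a i) \<in> span (a ` (J - {j0}))"
    by (intro span_mul span_neg span_sum span_base) auto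
  ultimately show ?thesis using True by simp
qed (use assms in \<open>simp add: span_base\<close>)

text \<open>The only linear relation among the a i is the dependency, so every right-hand side
  compatible with it is attained.\<close>
lemma inner_system_solvable:
  assumes "(\<Sum>i\<in>J. lam i * t i) = 0"
  obtains x where "\<forall>i\<in>J. a i \<bullet> x = t i"
proof -
  obtain g :: "'v \<Rightarrow> real" where "linear g" and g: "\<forall>i\<in>J - {j0}. g (a i) = t i"
    using linear_independent_extend[OF independent_image_rest,
        of "\<lambda>v. t (inv_into (J - {j0}) a v)"] inj_on_rest
    by auto
  define x where "x = adjoint g 1"
  have x_rest: "a i \<bullet> x = t i" if "i \<in> J - {j0}" for i
    using adjoint_works[OF \<open>linear g\<close>, of "a i" 1] g that by (simp add: x_def)
  have "lam j0 * (a j0 \<bullet> x) = (\<Sum>i\<in>J. lam i *\<^sub>R a i) \<bullet> x - (\<Sum>i\<in>J - {j0}. lam i * (a i \<bullet> x))"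
    using sum.remove[OF finite_J j0_in_J, of "\<lambda>i. lam i *\<^sub>R a i"]
    by (simp add: inner_sum_left inner_add_left)
  also have "\<dots> = - (\<Sum>i\<in>J - {j0}. lam i * t i)"
    using dependency x_rest by (simp add: sum_negf)
  also have "\<dots> = lam j0 * t j0"
    using assms sum.remove[OF finite_J j0_in_J, of "\<lambda>i. lam i * t i"] by simp
  finally have "a j0 \<bullet> x = t j0" using lam_pos[OF j0_in_J] by simp
  with x_rest have "\<forall>i\<in>J. a i \<bullet> x = t i" by blast
  then show thesis by (rule that)
qed

definition lineality_space :: "'v set" where
  "lineality_space = {x. \<forall>i\<in>J. a i \<bullet> x = 0}"

lemma subspace_lineality_space: "subspace lineality_space"
  unfolding subspace_def lineality_space_def by (auto simp: inner_add_right)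

lemma dim_lineality_space: "dim lineality_space + (card J - 1) = DIM('v)"
proof -
  define B where "B = a ` (J - {j0})"
  have "dim (span B) = card J - 1"
    using independent_image_rest inj_on_rest finite_J j0_in_J
    by (simp add: B_def dim_eq_card_independent card_image)
  moreover have "lineality_space = {y \<in> UNIV. \<forall>x \<in> span B. orthogonal x y}"
  proof (intro set_eqI iffI)
    fix y assume y: "y \<in> lineality_space"
    have "orthogonal y x" if "x \<in> span B" for x
      by (rule orthogonal_to_span[OF that])
        (use y in \<open>auto simp: B_def lineality_space_def orthogonal_def inner_commute\<close>)
    then show "y \<in> {y \<in> UNIV. \<forall>x \<in> span B. orthogonal x y}"
      by (simp add: orthogonal_commute)
  next
    fix y assume "y \<in> {y \<in> UNIV. \<forall>x \<in> span B. orthogonal x y}"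
    then show "y \<in> lineality_space"
      using a_in_span_rest by (auto simp: B_def lineality_space_def orthogonal_def)
  qed
  moreover have "dim {y \<in> UNIV. \<forall>x \<in> span B. orthogonal x y} + dim (span B) = dim (UNIV :: 'v set)"
    by (rule dim_subspace_orthogonal_to_vectors) auto
  ultimately show ?thesis by simp
qed

lemma two_le_card:
  assumes "\<And>i. i \<in> J \<Longrightarrow> a i \<noteq> 0"
  shows "2 \<le> card J"
proof (rule ccontr)
  assume "\<not> 2 \<le> card J"
  moreover have "card J \<noteq> 0" using finite_J j0_in_J by auto
  ultimately have "card J = 1" by linarith
  then obtain j where "J = {j}" by (rule card_1_singletonE)
  with j0_in_J have "J = {j0}" by simp
  then have "lam j0 *\<^sub>R a j0 = 0" using dependency by simp
  then show False using lam_pos assms j0_in_J by force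
qed

lemma rhs_pos_if_strictly_feasible:
  assumes "\<forall>i\<in>J. a i \<bullet> x < b i"
  shows "0 < (\<Sum>i\<in>J. lam i * b i)"
proof -
  have "(\<Sum>i\<in>J. lam i * (a i \<bullet> x)) < (\<Sum>i\<in>J. lam i * b i)"
    using finite_J j0_in_J lam_pos assms by (intro sum_strict_mono) auto
  moreover have "(\<Sum>i\<in>J. lam i * (a i \<bullet> x)) = (\<Sum>i\<in>J. lam i *\<^sub>R a i) \<bullet> x"
    by (simp add: inner_sum_left)
  ultimately show ?thesis using dependency by simp
qed

end

locale circuit_polyhedron = positive_circuit a J j0 lam
  for a :: "'i \<Rightarrow> 'v::euclidean_space" and J j0 lam +
  fixes b :: "'i \<Rightarrow> real"
  assumes rhs_pos: "0 < (\<Sum>i\<in>J. lam i * b i)"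
begin

definition polyhedron :: "'v set" where
  "polyhedron = {x. \<forall>i\<in>J. a i \<bullet> x \<le> b i}"

text \<open>As the a i sum to zero with weights lam i, the weighted slacks
  lam i * (b i - a i \<bullet> x) add up to total_slack at every x; divided by total_slack
  they are the barycentric coordinates of x in the simplex spanned by the vertices.\<close>
definition total_slack :: real where
  "total_slack = (\<Sum>i\<in>J. lam i * b i)"

text \<open>The vertex is unique only up to the lineality space; any choice will do.\<close>
definition vertex :: "'i \<Rightarrow> 'v" where
  "vertex j = (SOME x. \<forall>i\<in>J. a i \<bullet> x = b i - (if i = j then total_slack / lam j else 0))"

lemma inner_vertex:
  assumes "j \<in> J" and "i \<in> J"
  shows "a i \<bullet> vertex j = b i - (if i = j then total_slack / lam j else 0)"
proof -
  have "(\<Sum>i\<in>J. lam i * (if i = j then total_slack / lam j else 0)) = total_slack"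
    using assms(1) lam_pos[OF assms(1)] finite_J by (simp add: if_distrib cong: if_cong)
  then have "(\<Sum>i\<in>J. lam i * (b i - (if i = j then total_slack / lam j else 0))) = 0"
    by (simp add: right_diff_distrib sum_subtractf total_slack_def)
  then obtain x where "\<forall>i\<in>J. a i \<bullet> x = b i - (if i = j then total_slack / lam j else 0)"
    by (rule inner_system_solvable)
  then have "\<forall>i\<in>J. a i \<bullet> vertex j = b i - (if i = j then total_slack / lam j else 0)"
    unfolding vertex_def by (rule someI)
  with assms(2) show ?thesis by blast
qed

lemma inner_vertex_combination:
  assumes "i \<in> J"
  shows "a i \<bullet> (\<Sum>j\<in>J. w j *\<^sub>R vertex j) = sum w J * b i - w i * total_slack / lam i"
proof -
  have "a i \<bullet> (\<Sum>j\<in>J. w j *\<^sub>R vertex j) = (\<Sum>j\<in>J. w j * (a i \<bullet> vertex j))"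
    by (simp add: inner_sum_right)
  also have "\<dots> = (\<Sum>j\<in>J. w j * b i - (if j = i then w i * total_slack / lam i else 0))"
    using assms by (intro sum.cong) (auto simp: inner_vertex right_diff_distrib)
  also have "\<dots> = sum w J * b i - w i * total_slack / lam i"
    using assms finite_J by (simp add: sum_subtractf sum_distrib_right)
  finally show ?thesis .
qed

lemma total_slack_pos: "0 < total_slack"
  using rhs_pos by (simp add: total_slack_def)

lemma inj_on_vertex: "inj_on vertex J"
proof (rule inj_onI, rule ccontr)
  fix j k assume jk: "j \<in> J" "k \<in> J" "vertex j = vertex k" "j \<noteq> k"
  then have "b j - total_slack / lam j = b j"
    using inner_vertex[of j j] inner_vertex[of k j] by simp
  then show False using total_slack_pos lam_pos[OF \<open>j \<in> J\<close>] by simp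
qed

lemma affine_independent_vertices: "\<not> affine_dependent (vertex ` J)"
proof
  assume "affine_dependent (vertex ` J)"
  then obtain u where u: "sum u (vertex ` J) = 0" "\<exists>x\<in>vertex ` J. u x \<noteq> 0"
      "(\<Sum>x\<in>vertex ` J. u x *\<^sub>R x) = 0"
    using affine_dependent_explicit_finite[of "vertex ` J"] finite_J by auto
  define w where "w = u \<circ> vertex"
  have "sum w J = 0" using u(1) by (simp add: w_def sum.reindex[OF inj_on_vertex])
  moreover have "(\<Sum>j\<in>J. w j *\<^sub>R vertex j) = 0"
    using u(3) sum.reindex[OF inj_on_vertex, of "\<lambda>x. u x *\<^sub>R x"] by (simp add: w_def)
  moreover obtain i where "i \<in> J" "w i \<noteq> 0" using u(2) by (auto simp: w_def)
  ultimately show False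
    using inner_vertex_combination[of i w] total_slack_pos lam_pos[of i] by simp
qed

lemma simplex_vertices: "(int (card J) - 1) simplex (convex hull (vertex ` J))"
  using affine_independent_vertices card_image[OF inj_on_vertex] by (intro simplex_convex_hull) simp

lemma polyhedron_eq_sum:
  "polyhedron = {d + u | d u. d \<in> convex hull (vertex ` J) \<and> u \<in> lineality_space}"
proof (intro set_eqI iffI)
  fix x assume x: "x \<in> polyhedron"
  define w where "w j = lam j * (b j - a j \<bullet> x) / total_slack" for j
  have "sum w J = ((\<Sum>j\<in>J. lam j * b j) - (\<Sum>j\<in>J. lam j *\<^sub>R a j) \<bullet> x) / total_slack"
    by (simp add: w_def sum_divide_distrib[symmetric] right_diff_distrib sum_subtractf inner_sum_left)
  then have "sum w J = 1" using total_slack_pos dependency by (simp add: total_slack_def)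
  moreover have "\<forall>j\<in>J. 0 \<le> w j"
    using x lam_pos total_slack_pos by (auto simp: w_def polyhedron_def less_imp_le)
  ultimately have "(\<Sum>j\<in>J. w j *\<^sub>R vertex j) \<in> convex hull (vertex ` J)"
    using finite_J by (auto simp: convex_hull_finite_image)
  moreover have "a i \<bullet> (\<Sum>j\<in>J. w j *\<^sub>R vertex j) = a i \<bullet> x" if "i \<in> J" for i
    using inner_vertex_combination[OF that, of w] \<open>sum w J = 1\<close> lam_pos[OF that] total_slack_pos
    by (simp add: w_def)
  then have "x - (\<Sum>j\<in>J. w j *\<^sub>R vertex j) \<in> lineality_space"
    by (simp add: lineality_space_def inner_diff_right)
  ultimately show "x \<in> {d + u | d u. d \<in> convex hull (vertex ` J) \<and> u \<in> lineality_space}"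
    by force
next
  fix x assume "x \<in> {d + u | d u. d \<in> convex hull (vertex ` J) \<and> u \<in> lineality_space}"
  then obtain w u where w: "\<forall>j\<in>J. 0 \<le> w j" "sum w J = 1" and "u \<in> lineality_space"
    and x: "x = (\<Sum>j\<in>J. w j *\<^sub>R vertex j) + u"
    using finite_J by (auto simp: convex_hull_finite_image)
  have "a i \<bullet> x \<le> b i" if "i \<in> J" for i
  proof -
    have "a i \<bullet> x = b i - w i * total_slack / lam i"
      using inner_vertex_combination[OF that, of w] w(2) \<open>u \<in> lineality_space\<close> that
      by (simp add: x inner_add_right lineality_space_def)
    moreover have "0 \<le> w i * total_slack / lam i"
      using w(1) total_slack_pos lam_pos that by (simp add: less_imp_le)
    ultimately show ?thesis by simp
  qed
  then show "x \<in> polyhedron" by (simp add: polyhedron_def)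
qed

lemma hull_points_eq_if_inner_eq:
  assumes "d1 \<in> convex hull (vertex ` J)" "d2 \<in> convex hull (vertex ` J)"
    and "\<forall>i\<in>J. a i \<bullet> d1 = a i \<bullet> d2"
  shows "d1 = d2"
proof -
  obtain w1 where w1: "sum w1 J = 1" "d1 = (\<Sum>j\<in>J. w1 j *\<^sub>R vertex j)"
    using assms(1) finite_J by (auto simp: convex_hull_finite_image)
  obtain w2 where w2: "sum w2 J = 1" "d2 = (\<Sum>j\<in>J. w2 j *\<^sub>R vertex j)"
    using assms(2) finite_J by (auto simp: convex_hull_finite_image)
  have "w1 i = w2 i" if "i \<in> J" for i
  proof -
    have "a i \<bullet> d1 = a i \<bullet> d2" using assms(3) that by blast
    then have "sum w1 J * b i - w1 i * total_slack / lam i = sum w2 J * b i - w2 i * total_slack / lam i"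
      by (simp only: w1(2) w2(2) inner_vertex_combination[OF that])
    then have "w1 i * total_slack / lam i = w2 i * total_slack / lam i"
      using w1(1) w2(1) by simp
    then show ?thesis using total_slack_pos lam_pos[OF that] by simp
  qed
  then show ?thesis using w1 w2 by (simp cong: sum.cong)
qed

lemma direct_sum_polyhedron:
  "direct_sum_eq polyhedron (convex hull (vertex ` J)) lineality_space"
proof -
  have "d1 = d2 \<and> u1 = u2"
    if d: "d1 \<in> convex hull (vertex ` J)" "d2 \<in> convex hull (vertex ` J)"
      and u: "u1 \<in> lineality_space" "u2 \<in> lineality_space" and "d1 + u1 = d2 + u2"
    for d1 d2 u1 u2
  proof -
    have "a i \<bullet> d1 = a i \<bullet> d2" if "i \<in> J" for i
    proof -
      have "a i \<bullet> d1 = a i \<bullet> (d1 + u1)"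
        using u(1) that by (simp add: inner_add_right lineality_space_def)
      also have "\<dots> = a i \<bullet> (d2 + u2)" by (simp add: \<open>d1 + u1 = d2 + u2\<close>)
      also have "\<dots> = a i \<bullet> d2"
        using u(2) that by (simp add: inner_add_right lineality_space_def)
      finally show ?thesis .
    qed
    then have "d1 = d2" using d by (intro hull_points_eq_if_inner_eq) auto
    with \<open>d1 + u1 = d2 + u2\<close> show ?thesis by simp
  qed
  then show ?thesis unfolding direct_sum_eq_def using polyhedron_eq_sum by blast
qed

end

theorem lemma5p3:
  fixes m :: nat and a :: "nat \<Rightarrow> real ^ 'n" and b :: "nat \<Rightarrow> real"
  assumes nz: "\<forall>i\<in>{1..m}. a i \<noteq> 0"
    and lf: "lattice_free {x. \<forall>i\<in>{1..m}. a i \<bullet> x \<le> b i}"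
  shows "\<exists>I. I \<subseteq> {1..m} \<and> I \<noteq> {} \<and>
           (\<exists>\<Delta> U k. subspace U \<and> dim U = k \<and> k < CARD('n) \<and>
              (int CARD('n) - int k) simplex \<Delta> \<and>
              direct_sum_eq {x. \<forall>i\<in>I. a i \<bullet> x \<le> b i} \<Delta> U)"
proof -
  obtain x where strict: "\<forall>i\<in>{1..m}. a i \<bullet> x < b i"
    and hull: "0 \<in> convex hull (a ` {1..m})"
    using lattice_free_polyhedron_normals[OF finite_atLeastAtMost nz lf] by blast
  obtain J j0 lam where "J \<subseteq> {1..m}" and circuit: "positive_circuit a J j0 lam"
    by (rule exists_positive_circuit[OF finite_atLeastAtMost hull])
  interpret positive_circuit a J j0 lam by (fact circuit)
  interpret circuit_polyhedron a J j0 lam b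
    using rhs_pos_if_strictly_feasible strict \<open>J \<subseteq> {1..m}\<close> by unfold_locales auto
  have "2 \<le> card J" using two_le_card nz \<open>J \<subseteq> {1..m}\<close> by auto
  have dim: "dim lineality_space + (card J - 1) = CARD('n)"
    using dim_lineality_space by simp
  show ?thesis
  proof (intro exI conjI)
    show "J \<subseteq> {1..m}" "J \<noteq> {}" using \<open>J \<subseteq> {1..m}\<close> j0_in_J by auto
    show "subspace lineality_space" by (fact subspace_lineality_space)
    show "dim lineality_space < CARD('n)" using dim \<open>2 \<le> card J\<close> by linarith
    have "int CARD('n) - int (dim lineality_space) = int (card J) - 1"
      using dim \<open>2 \<le> card J\<close> by linarith
    then show "(int CARD('n) - int (dim lineality_space)) simplex (convex hull (vertex ` J))"
      using simplex_vertices by simp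
    show "direct_sum_eq {x. \<forall>i\<in>J. a i \<bullet> x \<le> b i} (convex hull (vertex ` J)) lineality_space"
      using direct_sum_polyhedron by (simp add: polyhedron_def)
  qed simp
qed

end
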